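(* Let $(L,\vee,\wedge,\to,f,g,0,1)$ be a spatial HGC-algebra. Then there exists a GC-frame $\mathcal{F}=(X,\leq,R)$ such that $(L,\vee,\wedge,\to,f,g,0,1)$ is isomorphic to the complex algebra $\mathbb{H}_{\rm GC}(\mathcal{F})=(\mathcal{T}_\leq,\cup,\cap,\to,{}^\blacktriangle,{}^\blacktriangledown,\emptyset,X)$.
   Context: A pair $(f,g)$ of maps $f,g\colon L\to L$ on a lattice $L$ is an (order-preserving) Galois connection if for all $a,b\in L$: $f(a)\leq b \iff a\leq g(b)$. An HGC-algebra $(L,\vee,\wedge,\to,f,g,0,1)$ is a Heyting algebra $(L,\vee,\wedge,\to,0,1)$ (where $a\to b$ is the greatest $x$ with $a\wedge x\leq b$) equipped with an order-preserving Galois connection $(f,g)$ on $L$. An element $a$ of a complete lattice is completely join-irreducible if $a=\bigvee S$ implies $a\in S$ for every subset $S$; a complete lattice is spatial if every element is the join of the completely join-irreducible elements below it. An HGC-algebra is spatial if its underlying lattice is a spatial (in particular complete) lattice. A GC-frame $(X,\leq,R)$ is a set $X$ with a quasiorder (reflexive, transitive relation) $\leq$ and a binary relation $R\subseteq X\times X$ such that $x\leq x'$, $x\,R\,y$ and $y'\leq y$ imply $x'\,R\,y'$. For a quasiorder $\leq$ on $X$, $\mathcal{T}_\leq$ is the set of all subsets $B\subseteq X$ that are $\leq$-closed upward ($x\in B$, $x\leq y$ imply $y\in B$). For $A\subseteq X$: $A^\blacktriangle=\{x\in X\mid x\,R\,y \text{ for some } y\in A\}$ and $A^\blacktriangledown=\{x\in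 X\mid \text{for all } y,\ y\,R\,x \text{ implies } y\in A\}$. On $\mathcal{T}_\leq$, $A\to B=\{a\in X\mid \text{for all } b\geq a,\ b\in A \text{ implies } b\in B\}$. The complex algebra $\mathbb{H}_{\rm GC}(\mathcal{F})$ is $(\mathcal{T}_\leq,\cup,\cap,\to,{}^\blacktriangle,{}^\blacktriangledown,\emptyset,X)$; isomorphism means an isomorphism preserving $\vee,\wedge,\to,f,g,0,1$ (with $f$ corresponding to ${}^\blacktriangle$ and $g$ to ${}^\blacktriangledown$). *)

theory Defs
  imports Main
begin

text \<open>The underlying lattice of a spatial HGC-algebra is complete,
  so we model it as a type of class complete_lattice; sup/inf/bot/top are the
  lattice operations, and the Heyting implication and the Galois connection
  are extra operations.\<close>

definition heyting_imp :: "('a::lattice \<Rightarrow> 'a \<Rightarrow> 'a) \<Rightarrow> bool" where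
  "heyting_imp imp \<longleftrightarrow>
     (\<forall>a b. inf a (imp a b) \<le> b \<and> (\<forall>x. inf a x \<le> b \<longrightarrow> x \<le> imp a b))"

definition galois_conn :: "('a::order \<Rightarrow> 'a) \<Rightarrow> ('a \<Rightarrow> 'a) \<Rightarrow> bool" where
  "galois_conn f g \<longleftrightarrow> (\<forall>a b. f a \<le> b \<longleftrightarrow> a \<le> g b)"

definition HGC_algebra :: "('a::{lattice,bounded_lattice} \<Rightarrow> 'a \<Rightarrow> 'a) \<Rightarrow> ('a \<Rightarrow> 'a) \<Rightarrow> ('a \<Rightarrow> 'a) \<Rightarrow> bool" where
  "HGC_algebra imp f g \<longleftrightarrow> heyting_imp imp \<and> galois_conn f g"

definition completely_join_irreducible :: "'a::complete_lattice \<Rightarrow> bool" where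
  "completely_join_irreducible a \<longleftrightarrow> (\<forall>S. a = Sup S \<longrightarrow> a \<in> S)"

definition spatial :: "'a::complete_lattice itself \<Rightarrow> bool" where
  "spatial _ \<longleftrightarrow> (\<forall>a::'a. a = Sup {j. completely_join_irreducible j \<and> j \<le> a})"

definition GC_frame :: "'b set \<Rightarrow> ('b \<Rightarrow> 'b \<Rightarrow> bool) \<Rightarrow> ('b \<Rightarrow> 'b \<Rightarrow> bool) \<Rightarrow> bool" where
  "GC_frame X le R \<longleftrightarrow>
     (\<forall>x y. le x y \<longrightarrow> x \<in> X \<and> y \<in> X) \<and>
     (\<forall>x y. R x y \<longrightarrow> x \<in> X \<and> y \<in> X) \<and>
     (\<forall>x\<in>X. le x x) \<and>
     (\<forall>x y z. le x y \<longrightarrow> le y z \<longrightarrow> le x z) \<and>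
     (\<forall>x x' y y'. le x x' \<longrightarrow> R x y \<longrightarrow> le y' y \<longrightarrow> R x' y')"

definition up_sets :: "'b set \<Rightarrow> ('b \<Rightarrow> 'b \<Rightarrow> bool) \<Rightarrow> 'b set set" where
  "up_sets X le = {B. B \<subseteq> X \<and> (\<forall>x y. x \<in> B \<longrightarrow> le x y \<longrightarrow> y \<in> B)}"

definition blacktriangle :: "'b set \<Rightarrow> ('b \<Rightarrow> 'b \<Rightarrow> bool) \<Rightarrow> 'b set \<Rightarrow> 'b set" where
  "blacktriangle X R A = {x \<in> X. \<exists>y\<in>A. R x y}"

definition blacktriangledown :: "'b set \<Rightarrow> ('b \<Rightarrow> 'b \<Rightarrow> bool) \<Rightarrow> 'b set \<Rightarrow> 'b set" where
  "blacktriangledown X R A = {x \<in> X. \<forall>y. R y x \<longrightarrow> y \<in> A}"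

definition frame_imp :: "'b set \<Rightarrow> ('b \<Rightarrow> 'b \<Rightarrow> bool) \<Rightarrow> 'b set \<Rightarrow> 'b set \<Rightarrow> 'b set" where
  "frame_imp X le A B = {a \<in> X. \<forall>b. le a b \<longrightarrow> b \<in> A \<longrightarrow> b \<in> B}"

definition HGC_iso_complex ::
  "('a::complete_lattice \<Rightarrow> 'a \<Rightarrow> 'a) \<Rightarrow> ('a \<Rightarrow> 'a) \<Rightarrow> ('a \<Rightarrow> 'a) \<Rightarrow>
   'b set \<Rightarrow> ('b \<Rightarrow> 'b \<Rightarrow> bool) \<Rightarrow> ('b \<Rightarrow> 'b \<Rightarrow> bool) \<Rightarrow> ('a \<Rightarrow> 'b set) \<Rightarrow> bool" where
  "HGC_iso_complex imp f g X le R h \<longleftrightarrow>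
     bij_betw h UNIV (up_sets X le) \<and>
     (\<forall>a b. h (sup a b) = h a \<union> h b) \<and>
     (\<forall>a b. h (inf a b) = h a \<inter> h b) \<and>
     (\<forall>a b. h (imp a b) = frame_imp X le (h a) (h b)) \<and>
     (\<forall>a. h (f a) = blacktriangle X R (h a)) \<and>
     (\<forall>a. h (g a) = blacktriangledown X R (h a)) \<and>
     h bot = {} \<and> h top = X"

end

theory Submission
  imports Defs
begin

text \<open>Send each element to the set of completely join-irreducible elements below it, and take
  as frame these elements with the reversed lattice order and x R y iff x \<le> f y. Injectivity is
  spatiality. In a Heyting algebra binary meets distribute over arbitrary joins, so a completely
  join-irreducible element below a join lies below one of the joinands; this makes the map
  preserve joins, be onto the down-closed sets of irreducibles, and commute with f, which as a
  left adjoint preserves joins. Implication and g are handled by spatiality and adjunction.\<close>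

lemma heyting_imp_inf_Sup_distrib:
  fixes imp :: "'a::complete_lattice \<Rightarrow> 'a \<Rightarrow> 'a" and x :: 'a
  assumes "heyting_imp imp"
  shows "inf x (Sup S) = Sup ((inf x) ` S)"
proof (rule order_antisym)
  have "\<And>s. s \<in> S \<Longrightarrow> s \<le> imp x (Sup ((inf x) ` S))"
    using assms unfolding heyting_imp_def by (meson SUP_upper)
  then have "Sup S \<le> imp x (Sup ((inf x) ` S))" by (rule Sup_least)
  then have "inf x (Sup S) \<le> inf x (imp x (Sup ((inf x) ` S)))" by (rule inf_mono[OF order.refl])
  also have "\<dots> \<le> Sup ((inf x) ` S)" using assms unfolding heyting_imp_def by blast
  finally show "inf x (Sup S) \<le> Sup ((inf x) ` S)" .
next
  show "Sup ((inf x) ` S) \<le> inf x (Sup S)"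
    by (rule SUP_least) (simp add: Sup_upper le_infI2)
qed

lemma heyting_imp_le_iff:
  assumes "heyting_imp imp"
  shows "x \<le> imp a b \<longleftrightarrow> inf a x \<le> b"
proof
  assume "x \<le> imp a b"
  then have "inf a x \<le> inf a (imp a b)" by (rule inf_mono[OF order.refl])
  then show "inf a x \<le> b" using assms unfolding heyting_imp_def by (blast intro: order.trans)
qed (use assms in \<open>simp add: heyting_imp_def\<close>)

lemma completely_join_irreducible_le_SupD:
  fixes imp :: "'a::complete_lattice \<Rightarrow> 'a \<Rightarrow> 'a" and x :: 'a
  assumes "heyting_imp imp" "completely_join_irreducible x" "x \<le> Sup S"
  shows "\<exists>s\<in>S. x \<le> s"
proof -
  have "x = inf x (Sup S)" using assms(3) by (simp add: inf_absorb1)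
  also have "\<dots> = Sup ((inf x) ` S)" by (rule heyting_imp_inf_Sup_distrib[OF assms(1)])
  finally have "x \<in> (inf x) ` S"
    using assms(2) unfolding completely_join_irreducible_def by blast
  then show ?thesis by (metis imageE inf.cobounded2)
qed

lemma completely_join_irreducible_not_bot: "completely_join_irreducible x \<Longrightarrow> x \<noteq> bot"
  unfolding completely_join_irreducible_def by (metis Sup_empty empty_iff)

lemma galois_conn_mono: "galois_conn f g \<Longrightarrow> a \<le> b \<Longrightarrow> f a \<le> f b"
  unfolding galois_conn_def by (meson order.refl order.trans)

lemma galois_conn_Sup:
  fixes f :: "'a::complete_lattice \<Rightarrow> 'a"
  assumes "galois_conn f g"
  shows "f (Sup S) = Sup (f ` S)"
proof (rule order_antisym)
  have "\<And>s. s \<in> S \<Longrightarrow> s \<le> g (Sup (f ` S))"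
    using assms unfolding galois_conn_def by (meson SUP_upper)
  then show "f (Sup S) \<le> Sup (f ` S)"
    using assms unfolding galois_conn_def by (blast intro: Sup_least)
  show "Sup (f ` S) \<le> f (Sup S)"
    by (rule SUP_least) (simp add: galois_conn_mono[OF assms] Sup_upper)
qed

definition cji_down :: "'a::complete_lattice \<Rightarrow> 'a set" where
  "cji_down a = {j. completely_join_irreducible j \<and> j \<le> a}"

definition cji_ge :: "'a::complete_lattice \<Rightarrow> 'a \<Rightarrow> bool" where
  "cji_ge x y \<longleftrightarrow> completely_join_irreducible x \<and> completely_join_irreducible y \<and> y \<le> x"

definition cji_rel :: "('a::complete_lattice \<Rightarrow> 'a) \<Rightarrow> 'a \<Rightarrow> 'a \<Rightarrow> bool" where
  "cji_rel f x y \<longleftrightarrow> completely_join_irreducible x \<and> completely_join_irreducible y \<and> x \<le> f y"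

abbreviation cji_set :: "'a::complete_lattice set" where
  "cji_set \<equiv> {j. completely_join_irreducible j}"

lemma spatial_le_iff_cji_down:
  fixes a :: "'a::complete_lattice"
  assumes "spatial TYPE('a)"
  shows "a \<le> b \<longleftrightarrow> cji_down a \<subseteq> cji_down b"
proof
  assume "cji_down a \<subseteq> cji_down b"
  then have "Sup (cji_down a) \<le> b" unfolding cji_down_def by (auto intro: Sup_least)
  then show "a \<le> b" using assms unfolding spatial_def cji_down_def by metis
qed (auto simp: cji_down_def)

lemma cji_down_Sup:
  fixes imp :: "'a::complete_lattice \<Rightarrow> 'a \<Rightarrow> 'a" and S :: "'a set"
  assumes "heyting_imp imp"
  shows "cji_down (Sup S) = (\<Union>s\<in>S. cji_down s)"
  using completely_join_irreducible_le_SupD[OF assms]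
  by (auto simp: cji_down_def intro: Sup_upper2)

lemma cji_down_sup:
  fixes imp :: "'a::complete_lattice \<Rightarrow> 'a \<Rightarrow> 'a" and a b :: 'a
  assumes "heyting_imp imp"
  shows "cji_down (sup a b) = cji_down a \<union> cji_down b"
  using cji_down_Sup[OF assms, of "{a, b}"] by simp

lemma cji_down_inf: "cji_down (inf a b) = cji_down a \<inter> cji_down b"
  by (auto simp: cji_down_def)

lemma cji_down_bot: "cji_down bot = {}"
  by (auto simp: cji_down_def bot_unique dest: completely_join_irreducible_not_bot)

lemma cji_down_top: "cji_down top = cji_set"
  by (simp add: cji_down_def)

lemma up_sets_cji_ge_eq_range_cji_down:
  fixes imp :: "'a::complete_lattice \<Rightarrow> 'a \<Rightarrow> 'a"
  assumes "heyting_imp imp"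
  shows "up_sets cji_set cji_ge = range (cji_down :: 'a \<Rightarrow> 'a set)"
proof (intro set_eqI iffI)
  fix B :: "'a set" assume B: "B \<in> up_sets cji_set cji_ge"
  have "cji_down (Sup B) = (\<Union>s\<in>B. cji_down s)" by (rule cji_down_Sup[OF assms])
  also have "\<dots> = B" using B by (auto simp: up_sets_def cji_ge_def cji_down_def)
  finally have "cji_down (Sup B) = B" .
  then show "B \<in> range cji_down" by (metis rangeI)
qed (auto simp: up_sets_def cji_ge_def cji_down_def dest: order.trans)

lemma GC_frame_cji:
  assumes "galois_conn f g"
  shows "GC_frame cji_set cji_ge (cji_rel f)"
  unfolding GC_frame_def cji_ge_def cji_rel_def
  by (auto dest: order.trans galois_conn_mono[OF assms])

lemma cji_down_imp:
  fixes imp :: "'a::complete_lattice \<Rightarrow> 'a \<Rightarrow> 'a" and a b :: 'a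
  assumes "heyting_imp imp" "spatial TYPE('a)"
  shows "cji_down (imp a b) = frame_imp cji_set cji_ge (cji_down a) (cji_down b)"
proof -
  have "j \<le> imp a b \<longleftrightarrow> cji_down (inf a j) \<subseteq> cji_down b" for j
    using heyting_imp_le_iff[OF assms(1)] spatial_le_iff_cji_down[OF assms(2)] by blast
  then show ?thesis by (auto simp: cji_down_def frame_imp_def cji_ge_def)
qed

lemma cji_down_left_adjoint:
  fixes imp :: "'a::complete_lattice \<Rightarrow> 'a \<Rightarrow> 'a" and f g :: "'a \<Rightarrow> 'a"
  assumes "heyting_imp imp" "spatial TYPE('a)" "galois_conn f g"
  shows "cji_down (f a) = blacktriangle cji_set (cji_rel f) (cji_down a)"
proof -
  have "a = Sup (cji_down a)" using assms(2) unfolding spatial_def cji_down_def by blast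
  then have "f a = Sup (f ` cji_down a)" by (metis galois_conn_Sup[OF assms(3)])
  then have "cji_down (f a) = (\<Union>y\<in>cji_down a. cji_down (f y))"
    by (simp add: cji_down_Sup[OF assms(1)])
  then show ?thesis by (auto simp: cji_down_def blacktriangle_def cji_rel_def)
qed

lemma cji_down_right_adjoint:
  fixes f :: "'a::complete_lattice \<Rightarrow> 'a"
  assumes "spatial TYPE('a)" "galois_conn f g"
  shows "cji_down (g a) = blacktriangledown cji_set (cji_rel f) (cji_down a)"
proof -
  have "x \<le> g a \<longleftrightarrow> cji_down (f x) \<subseteq> cji_down a" for x
    using assms(2) spatial_le_iff_cji_down[OF assms(1)] unfolding galois_conn_def by metis
  then show ?thesis by (auto simp: cji_down_def blacktriangledown_def cji_rel_def)
qed

theorem theorem4p2: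
  fixes imp :: "'a::complete_lattice \<Rightarrow> 'a \<Rightarrow> 'a"
    and f g :: "'a \<Rightarrow> 'a"
  assumes "HGC_algebra imp f g"
    and "spatial TYPE('a)"
  shows "\<exists>(X::'a set) le R h. GC_frame X le R \<and> HGC_iso_complex imp f g X le R h"
proof -
  have H: "heyting_imp imp" and G: "galois_conn f g"
    using assms(1) unfolding HGC_algebra_def by auto
  have "inj (cji_down :: 'a \<Rightarrow> 'a set)"
    by (intro injI order.antisym) (simp_all add: spatial_le_iff_cji_down[OF assms(2)])
  then have "bij_betw (cji_down :: 'a \<Rightarrow> 'a set) UNIV (up_sets cji_set cji_ge)"
    by (simp add: bij_betw_def up_sets_cji_ge_eq_range_cji_down[OF H])
  then have "HGC_iso_complex imp f g cji_set cji_ge (cji_rel f) cji_down"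
    unfolding HGC_iso_complex_def
    using cji_down_sup[OF H] cji_down_inf cji_down_imp[OF H assms(2)]
      cji_down_left_adjoint[OF H assms(2) G] cji_down_right_adjoint[OF assms(2) G]
      cji_down_bot cji_down_top
    by blast
  then show ?thesis using GC_frame_cji[OF G] by blast
qed

end
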